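(* In a combinatorial auction where all bidders other than $i$ play piecewise constant strategies, every cell of bidder $i$'s action space is a convex polytope.
   Context: A combinatorial auction sells goods $M$ to bidders $N$; each bidder $i$ bids a vector $b_i\in\mathbb{R}_{\ge0}^r$ on his $r$ bundles of interest (other bundles bid $0$). An allocation gives each bidder one bundle of interest or $\emptyset$, pairwise disjoint; $X(b)$ is the set of allocations maximizing reported welfare $\sum_i b_i(x_i)$. Bidders' valuations are independent random variables $V_j$ and strategies $s_j$ map valuations to bids; piecewise constant means finitely many values, so $b_{-i}=s_{-i}(V_{-i})$ has finite support. A cell of bidder $i$'s action space $\mathbb{R}_{\ge0}^r$ is a maximal (with respect to inclusion) connected region $S$ such that for every $b_{-i}$ with positive probability there exists an allocation $x$ with $x\in X(b_i,b_{-i})$ for all $b_i\in S$. *)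

theory Defs
  imports "HOL-Analysis.Analysis" "HOL-Probability.Probability"
begin

text \<open>Every bidder j has r bnds
of interest, indexed by the finite type 'r: bnd j k is bidder j's k-th bnd of interest.
A bid profile assigns to every bidder a vector in real^'r (one entry per bnd of interest).
An allocation assigns to each bidder either one of his bnds of interest (Some k) or the
empty bnd (None); bidders outside N get None.\<close>

definition is_alloc :: "'b set \<Rightarrow> 'g set \<Rightarrow> ('b \<Rightarrow> 'r \<Rightarrow> 'g set) \<Rightarrow> ('b \<Rightarrow> 'r option) \<Rightarrow> bool" where
  "is_alloc N M bnd x \<longleftrightarrow>
     (\<forall>j. j \<notin> N \<longrightarrow> x j = None) \<and>
     (\<forall>j\<in>N. \<forall>k. x j = Some k \<longrightarrow> bnd j k \<subseteq> M) \<and>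
     (\<forall>j\<in>N. \<forall>j'\<in>N. \<forall>k k'. j \<noteq> j' \<longrightarrow> x j = Some k \<longrightarrow> x j' = Some k' \<longrightarrow>
        bnd j k \<inter> bnd j' k' = {})"

definition bid_value :: "real^'r::finite \<Rightarrow> 'r option \<Rightarrow> real" where
  "bid_value v o' = (case o' of None \<Rightarrow> 0 | Some k \<Rightarrow> v $ k)"

definition welfare :: "'b set \<Rightarrow> ('b \<Rightarrow> real^'r::finite) \<Rightarrow> ('b \<Rightarrow> 'r option) \<Rightarrow> real" where
  "welfare N b x = (\<Sum>j\<in>N. bid_value (b j) (x j))"

definition opt_allocs :: "'b set \<Rightarrow> 'g set \<Rightarrow> ('b \<Rightarrow> 'r \<Rightarrow> 'g set) \<Rightarrow> ('b \<Rightarrow> real^'r::finite)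
    \<Rightarrow> ('b \<Rightarrow> 'r option) set" where
  "opt_allocs N M bnd b = {x. is_alloc N M bnd x \<and>
      (\<forall>y. is_alloc N M bnd y \<longrightarrow> welfare N b y \<le> welfare N b x)}"

definition action_space :: "(real^'r::finite) set" where
  "action_space = {v. \<forall>k. 0 \<le> v $ k}"

text \<open>Opponent bid profiles b_{-i} with positive probability. A profile is represented as a
function c with c j = 0 for j outside N - {i}; bidder j plays s j (V j \<omega>).\<close>
definition pos_prob_profiles :: "'w measure \<Rightarrow> 'b set \<Rightarrow> 'b \<Rightarrow> ('b \<Rightarrow> 'w \<Rightarrow> 'v)
    \<Rightarrow> ('b \<Rightarrow> 'v \<Rightarrow> real^'r::finite) \<Rightarrow> ('b \<Rightarrow> real^'r) set" where
  "pos_prob_profiles P N i V s = {c. (\<forall>j. j \<notin> N - {i} \<longrightarrow> c j = 0) \<and>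
      measure P {\<omega>\<in>space P. \<forall>j\<in>N - {i}. s j (V j \<omega>) = c j} > 0}"

definition common_opt :: "'b set \<Rightarrow> 'g set \<Rightarrow> ('b \<Rightarrow> 'r \<Rightarrow> 'g set) \<Rightarrow> 'b
    \<Rightarrow> ('b \<Rightarrow> real^'r::finite) set \<Rightarrow> (real^'r) set \<Rightarrow> bool" where
  "common_opt N M bnd i D S \<longleftrightarrow>
     (\<forall>c\<in>D. \<exists>x. \<forall>bi\<in>S. x \<in> opt_allocs N M bnd (c(i := bi)))"

definition is_cell :: "'b set \<Rightarrow> 'g set \<Rightarrow> ('b \<Rightarrow> 'r \<Rightarrow> 'g set) \<Rightarrow> 'b
    \<Rightarrow> ('b \<Rightarrow> real^'r::finite) set \<Rightarrow> (real^'r) set \<Rightarrow> bool" where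
  "is_cell N M bnd i D S \<longleftrightarrow>
     S \<subseteq> action_space \<and> connected S \<and> common_opt N M bnd i D S \<and>
     (\<forall>T. S \<subseteq> T \<and> T \<subseteq> action_space \<and> connected T \<and> common_opt N M bnd i D T \<longrightarrow> T = S)"

end

theory Submission
  imports Defs
begin

text \<open>For a fixed opponent profile, the reported welfare of each allocation is an affine
function of bidder i's bid, and there are only finitely many allocations; so the bids for which
a given allocation is optimal form a polyhedron. Piecewise constant opponents produce only
finitely many profiles of positive probability. Choosing for each of them an allocation that is
optimal on the whole cell S, the intersection T of the orthant with the corresponding
polyhedra is a polyhedron containing S; being convex, it is connected, and it has the common
optimum property by construction, so maximality of S gives S = T.\<close>

definition bundle_indicator :: "'r::finite option \<Rightarrow> real^'r" where
  "bundle_indicator o' = (case o' of None \<Rightarrow> 0 | Some k \<Rightarrow> axis k 1)"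

lemma bid_value_eq_inner: "bid_value v o' = v \<bullet> bundle_indicator o'"
  by (cases o') (simp_all add: bid_value_def bundle_indicator_def inner_axis)

lemma welfare_fun_upd:
  assumes "finite N" "i \<in> N"
  shows "welfare N (c(i := bi)) y = bi \<bullet> bundle_indicator (y i) + welfare (N - {i}) c y"
proof -
  have "welfare N (c(i := bi)) y = bid_value bi (y i) + welfare (N - {i}) (c(i := bi)) y"
    unfolding welfare_def using assms by (simp add: sum.remove)
  also have "welfare (N - {i}) (c(i := bi)) y = welfare (N - {i}) c y"
    unfolding welfare_def by (rule sum.cong) auto
  finally show ?thesis by (simp only: bid_value_eq_inner)
qed

lemma finite_allocs:
  assumes "finite N"
  shows "finite {x :: 'b \<Rightarrow> 'r::finite option. is_alloc N M bnd x}"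
proof (rule finite_subset)
  show "{x. is_alloc N M bnd x} \<subseteq>
      {x :: 'b \<Rightarrow> 'r option. \<forall>j. (j \<in> N \<longrightarrow> x j \<in> UNIV) \<and> (j \<notin> N \<longrightarrow> x j = None)}"
    by (auto simp: is_alloc_def)
  show "finite {x :: 'b \<Rightarrow> 'r option. \<forall>j. (j \<in> N \<longrightarrow> x j \<in> UNIV) \<and> (j \<notin> N \<longrightarrow> x j = None)}"
    using assms by (intro finite_set_of_finite_funs) auto
qed

lemma polyhedron_welfare_le:
  assumes "finite N" "i \<in> N"
  shows "polyhedron {bi. welfare N (c(i := bi)) y \<le> welfare N (c(i := bi)) x}"
proof -
  have "{bi. welfare N (c(i := bi)) y \<le> welfare N (c(i := bi)) x} =
      {bi. (bundle_indicator (y i) - bundle_indicator (x i)) \<bullet> bi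
             \<le> welfare (N - {i}) c x - welfare (N - {i}) c y}"
    using assms by (auto simp: welfare_fun_upd inner_diff_right inner_commute)
  then show ?thesis by (simp add: polyhedron_halfspace_le)
qed

lemma polyhedron_opt_allocs_region:
  assumes "finite N" "i \<in> N"
  shows "polyhedron {bi. x \<in> opt_allocs N M bnd (c(i := bi))}"
proof (cases "is_alloc N M bnd x")
  case True
  then have "{bi. x \<in> opt_allocs N M bnd (c(i := bi))} =
      (\<Inter>y\<in>{y. is_alloc N M bnd y}. {bi. welfare N (c(i := bi)) y \<le> welfare N (c(i := bi)) x})"
    by (auto simp: opt_allocs_def)
  moreover have "polyhedron (\<Inter>y\<in>{y. is_alloc N M bnd y}.
      {bi. welfare N (c(i := bi)) y \<le> welfare N (c(i := bi)) x})"
    using finite_allocs[OF assms(1)] polyhedron_welfare_le[OF assms]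
    by (intro polyhedron_Inter) auto
  ultimately show ?thesis by simp
next
  case False
  then show ?thesis by (simp add: opt_allocs_def)
qed

lemma polyhedron_action_space: "polyhedron (action_space :: (real^'r::finite) set)"
proof -
  have "action_space = (\<Inter>k. {v :: real^'r. (- axis k 1) \<bullet> v \<le> 0})"
    by (auto simp: action_space_def inner_axis')
  moreover have "polyhedron (\<Inter>k. {v :: real^'r. (- axis k 1) \<bullet> v \<le> 0})"
    by (intro polyhedron_Inter) (auto simp del: inner_minus_left simp: polyhedron_halfspace_le)
  ultimately show ?thesis by simp
qed

lemma finite_pos_prob_profiles:
  assumes "finite N" "\<forall>j\<in>N - {i}. finite (range (s j))"
  shows "finite (pos_prob_profiles P N i V s)"
proof (rule finite_subset)
  let ?B = "\<Union>j\<in>N - {i}. range (s j)"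
  show "pos_prob_profiles P N i V s \<subseteq>
      {c. \<forall>j. (j \<in> N - {i} \<longrightarrow> c j \<in> ?B) \<and> (j \<notin> N - {i} \<longrightarrow> c j = 0)}"
  proof (intro subsetI CollectI allI conjI impI)
    fix c j assume c: "c \<in> pos_prob_profiles P N i V s"
    then show "j \<notin> N - {i} \<Longrightarrow> c j = 0" by (simp add: pos_prob_profiles_def)
    from c have "measure P {\<omega>\<in>space P. \<forall>j\<in>N - {i}. s j (V j \<omega>) = c j} > 0"
      by (simp add: pos_prob_profiles_def)
    then have "{\<omega>\<in>space P. \<forall>j\<in>N - {i}. s j (V j \<omega>) = c j} \<noteq> {}"
      by (metis less_irrefl measure_empty)
    then obtain \<omega> where "\<forall>j\<in>N - {i}. s j (V j \<omega>) = c j" by blast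
    then show "j \<in> N - {i} \<Longrightarrow> c j \<in> ?B" by (metis UN_iff rangeI)
  qed
  show "finite {c. \<forall>j. (j \<in> N - {i} \<longrightarrow> c j \<in> ?B) \<and> (j \<notin> N - {i} \<longrightarrow> c j = 0)}"
    using assms by (intro finite_set_of_finite_funs) auto
qed

lemma polyhedron_cell:
  assumes "finite N" "i \<in> N" "finite D" and cell: "is_cell N M bnd i D S"
  shows "polyhedron S"
proof -
  from cell obtain X where X: "\<forall>c\<in>D. \<forall>bi\<in>S. X c \<in> opt_allocs N M bnd (c(i := bi))"
    unfolding is_cell_def common_opt_def by metis
  define T where
    "T = action_space \<inter> (\<Inter>c\<in>D. {bi. X c \<in> opt_allocs N M bnd (c(i := bi))})"
  have "polyhedron T"
    unfolding T_def using assms(3) polyhedron_opt_allocs_region[OF assms(1,2)]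
    by (intro polyhedron_Int polyhedron_action_space polyhedron_Inter) auto
  moreover have "T = S"
  proof -
    have "S \<subseteq> T" using cell X by (auto simp: T_def is_cell_def)
    moreover have "connected T"
      using \<open>polyhedron T\<close> by (simp add: polyhedron_imp_convex convex_connected)
    moreover have "common_opt N M bnd i D T" unfolding common_opt_def T_def by blast
    ultimately show "T = S" using cell unfolding is_cell_def T_def by blast
  qed
  ultimately show ?thesis by simp
qed

theorem lemma2:
  fixes N :: "'b set" and M :: "'g set" and bnd :: "'b \<Rightarrow> 'r::finite \<Rightarrow> 'g set"
    and i :: 'b and P :: "'w measure" and Mv :: "'b \<Rightarrow> 'v measure"
    and V :: "'b \<Rightarrow> 'w \<Rightarrow> 'v" and s :: "'b \<Rightarrow> 'v \<Rightarrow> real^'r"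
    and S :: "(real^'r) set"
  assumes "finite N" and "finite M" and "i \<in> N"
    and "\<forall>j\<in>N. \<forall>k. bnd j k \<subseteq> M"
    and "prob_space P"
    and "prob_space.indep_vars P Mv V (N - {i})"
    and "\<forall>j\<in>N - {i}. finite (range (s j))"
    and "is_cell N M bnd i (pos_prob_profiles P N i V s) S"
  shows "convex S \<and> polyhedron S"
proof -
  have "finite (pos_prob_profiles P N i V s)"
    using assms(1,7) by (rule finite_pos_prob_profiles)
  then have "polyhedron S"
    using assms(1,3,8) by (intro polyhedron_cell) auto
  then show ?thesis by (simp add: polyhedron_imp_convex)
qed

end
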